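(* Let $m\ge 2$ and let $B$ be a blocker in $CK(2m)$ such that $e=[2m-3,2m-2]\in B$ and $f=[2m-2,2m-1]\notin B$. Then $e$ is the only edge of $B$ having $2m-2$ or $2m-1$ as an endpoint.
   Context: $CK(2m)$ denotes the complete convex geometric graph whose vertices are the $2m$ vertices of a convex polygon, labelled cyclically $0,1,\dots,2m-1$, and whose edges are all straight segments between pairs of vertices. Two edges with four distinct endpoints cross iff their endpoints alternate in the cyclic order. A simple perfect matching (SPM) is a set of $m$ edges that are pairwise disjoint (no common endpoint and no crossing). A blocking set is a set of edges containing at least one edge of every SPM. A blocker is a blocking set with exactly $m$ edges. *)

theory Defs
  imports Main
begin

text \<open>Vertices of CK(n) are 0..n-1 in cyclic order; an edge is a 2-element set of vertices.\<close>

definition ck_edges :: "nat \<Rightarrow> nat set set" where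
  "ck_edges n = {{a, b} | a b. a < b \<and> b < n}"

text \<open>Two edges cross iff their four (distinct) endpoints alternate in the cyclic order.\<close>
definition crosses :: "nat set \<Rightarrow> nat set \<Rightarrow> bool" where
  "crosses e f \<longleftrightarrow>
     (\<exists>a b c d. ((e = {a, b} \<and> f = {c, d}) \<or> (e = {c, d} \<and> f = {a, b}))
                \<and> a < c \<and> c < b \<and> b < d)"

definition disjoint_edges :: "nat set \<Rightarrow> nat set \<Rightarrow> bool" where
  "disjoint_edges e f \<longleftrightarrow> e \<inter> f = {} \<and> \<not> crosses e f"

definition is_SPM :: "nat \<Rightarrow> nat set set \<Rightarrow> bool" where
  "is_SPM m M \<longleftrightarrow> M \<subseteq> ck_edges (2 * m) \<and> card M = m \<and>
     (\<forall>e\<in>M. \<forall>f\<in>M. e \<noteq> f \<longrightarrow> disjoint_edges e f)"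

definition is_blocking_set :: "nat \<Rightarrow> nat set set \<Rightarrow> bool" where
  "is_blocking_set m B \<longleftrightarrow> B \<subseteq> ck_edges (2 * m) \<and>
     (\<forall>M. is_SPM m M \<longrightarrow> B \<inter> M \<noteq> {})"

definition is_blocker :: "nat \<Rightarrow> nat set set \<Rightarrow> bool" where
  "is_blocker m B \<longleftrightarrow> is_blocking_set m B \<and> card B = m"

end

theory Submission
  imports Defs
begin

(*
  Put k = m - 1, so that e = {2k-1, 2k} and f = {2k, 2k+1}.
  For every i < k the edges {a, b} of CK(2k) with a + b = 2i+1 (mod 2k) form a
  simple perfect matching of CK(2k), the i-th "parallel class"; distinct parallel
  classes share no edge.  Adding the boundary edge f to any simple perfect matching
  of CK(2k) yields one of CK(2k+2).  Hence a blocking set of CK(2m) avoiding f meets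
  each of the k parallel classes, and so contains at least k = m - 1 edges whose
  endpoints all lie below 2k.  The edge e and any further edge g of B at 2k or 2k+1
  are not among them, so a blocker containing such a g would have m + 1 edges.
*)

lemma doubleton_ordered_eq:
  fixes a b c d :: nat
  assumes "a < b" "c < d" "{a, b} = {c, d}"
  shows "a = c \<and> b = d"
  using assms by (auto simp: doubleton_eq_iff)

lemma crosses_ordered:
  fixes a b c d :: nat
  assumes "a < b" "c < d" "crosses {a, b} {c, d}"
  shows "(a < c \<and> c < b \<and> b < d) \<or> (c < a \<and> a < d \<and> d < b)"
proof -
  obtain x y z w where
    pos: "({a, b} = {x, y} \<and> {c, d} = {z, w}) \<or> ({a, b} = {z, w} \<and> {c, d} = {x, y})"
    and ord: "x < z" "z < y" "y < w"
    using assms(3) unfolding crosses_def by blast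
  have "x < y" "z < w" using ord by auto
  with pos consider "a = x" "b = y" "c = z" "d = w" | "a = z" "b = w" "c = x" "d = y"
    using doubleton_ordered_eq[OF assms(1)] doubleton_ordered_eq[OF assms(2)] by metis
  then show ?thesis using ord by cases auto
qed

lemma disjoint_edges_separated:
  fixes a b c d :: nat
  assumes "a < b" "b < c" "c < d"
  shows "disjoint_edges {a, b} {c, d}" "disjoint_edges {c, d} {a, b}"
  using assms crosses_ordered[of a b c d] crosses_ordered[of c d a b]
  unfolding disjoint_edges_def by auto

lemma finite_ck_edges: "finite (ck_edges n)"
proof (rule finite_subset)
  show "ck_edges n \<subseteq> Pow {..<n}" unfolding ck_edges_def by auto
qed simp

text \<open>The i-th parallel class of CK(2k): the edges {a, b} with a + b \<equiv> 2i+1 (mod 2k).\<close>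
definition parallel_class :: "nat \<Rightarrow> nat \<Rightarrow> nat set set" where
  "parallel_class k i =
     (\<lambda>a. {a, 2*i+1-a}) ` {..i} \<union> (\<lambda>a. {a, 2*i+1+2*k-a}) ` {2*i+2..<i+k+1}"

lemma parallel_class_edge:
  assumes "i < k" "g \<in> parallel_class k i"
  shows "\<exists>a b. g = {a, b} \<and> a < b \<and> b < 2*k \<and> (a + b = 2*i+1 \<or> a + b = 2*i+1+2*k)"
  using assms unfolding parallel_class_def
proof (elim UnE imageE)
  fix a assume "g = {a, 2*i+1-a}" "a \<in> {..i}"
  then show ?thesis using assms(1) by (intro exI[of _ a] exI[of _ "2*i+1-a"]) auto
next
  fix a assume "g = {a, 2*i+1+2*k-a}" "a \<in> {2*i+2..<i+k+1}"
  then show ?thesis using assms(1) by (intro exI[of _ a] exI[of _ "2*i+1+2*k-a"]) auto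
qed

lemma parallel_class_vertex_bound:
  "i < k \<Longrightarrow> g \<in> parallel_class k i \<Longrightarrow> x \<in> g \<Longrightarrow> x < 2*k"
  using parallel_class_edge by fastforce

lemma card_parallel_class:
  assumes "i < k"
  shows "card (parallel_class k i) = k"
proof -
  let ?L = "(\<lambda>a. {a, 2*i+1-a}) ` {..i}"
  let ?R = "(\<lambda>a. {a, 2*i+1+2*k-a}) ` {2*i+2..<i+k+1}"
  have inj_L: "inj_on (\<lambda>a. {a, 2*i+1-a}) {..i}"
    by (rule inj_onI) (auto simp: doubleton_eq_iff)
  have inj_R: "inj_on (\<lambda>a. {a, 2*i+1+2*k-a}) {2*i+2..<i+k+1}"
    by (rule inj_onI) (auto simp: doubleton_eq_iff)
  have "?L \<inter> ?R = {}"
    using assms by (auto simp: doubleton_eq_iff)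
  then have "card (parallel_class k i) = card ?L + card ?R"
    unfolding parallel_class_def by (intro card_Un_disjoint) auto
  also have "\<dots> = (i + 1) + (k - i - 1)"
    using card_image[OF inj_L] card_image[OF inj_R] by simp
  finally show ?thesis using assms by simp
qed

lemma disjoint_edges_same_sum:
  fixes a b c d k s :: nat
  assumes "a < b" "c < d" "b < 2*k" "d < 2*k"
    and "a + b = s \<or> a + b = s + 2*k" "c + d = s \<or> c + d = s + 2*k"
    and "{a, b} \<noteq> {c, d}"
  shows "disjoint_edges {a, b} {c, d}"
proof -
  have "{a, b} \<inter> {c, d} = {}" using assms by auto
  moreover have "\<not> crosses {a, b} {c, d}"
    using crosses_ordered[OF assms(1,2)] assms by auto
  ultimately show ?thesis unfolding disjoint_edges_def by simp
qed

lemma parallel_class_SPM: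
  assumes "i < k"
  shows "is_SPM k (parallel_class k i)"
  unfolding is_SPM_def
proof (intro conjI ballI impI)
  show "parallel_class k i \<subseteq> ck_edges (2*k)"
    using parallel_class_edge[OF assms] unfolding ck_edges_def by blast
  show "card (parallel_class k i) = k"
    using card_parallel_class[OF assms] .
  fix e f assume "e \<in> parallel_class k i" "f \<in> parallel_class k i" "e \<noteq> f"
  with parallel_class_edge[OF assms] obtain a b c d where
    "e = {a, b}" "a < b" "b < 2*k" "a + b = 2*i+1 \<or> a + b = 2*i+1+2*k"
    "f = {c, d}" "c < d" "d < 2*k" "c + d = 2*i+1 \<or> c + d = 2*i+1+2*k"
    by metis
  with \<open>e \<noteq> f\<close> show "disjoint_edges e f"
    using disjoint_edges_same_sum[of a b c d k "2*i+1"] by auto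
qed

lemma parallel_classes_disjoint:
  assumes "i < k" "j < k" "i \<noteq> j"
  shows "parallel_class k i \<inter> parallel_class k j = {}"
proof (rule ccontr)
  assume "parallel_class k i \<inter> parallel_class k j \<noteq> {}"
  then obtain g where g: "g \<in> parallel_class k i" "g \<in> parallel_class k j" by blast
  obtain a b where ab: "g = {a, b}" "a < b" "a + b = 2*i+1 \<or> a + b = 2*i+1+2*k"
    using parallel_class_edge[OF assms(1) g(1)] by blast
  obtain c d where cd: "g = {c, d}" "c < d" "c + d = 2*j+1 \<or> c + d = 2*j+1+2*k"
    using parallel_class_edge[OF assms(2) g(2)] by blast
  have "a = c \<and> b = d" using doubleton_ordered_eq ab cd by metis
  with ab cd assms show False by auto
qed

lemma SPM_extend_boundary_edge:
  assumes "is_SPM k M"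
  shows "is_SPM (k + 1) (insert {2*k, 2*k+1} M)"
proof -
  let ?f = "{2*k, 2*k+1}"
  have M_low: "M \<subseteq> ck_edges (2*k)"
    using assms unfolding is_SPM_def by auto
  have low: "\<exists>a b. g = {a, b} \<and> a < b \<and> b < 2*k" if "g \<in> M" for g
    using M_low that unfolding ck_edges_def by blast
  have f_notin: "?f \<notin> M"
    using low by (fastforce simp: doubleton_eq_iff)
  have finite_M: "finite M"
    using finite_subset[OF M_low finite_ck_edges] .
  have "ck_edges (2*k) \<subseteq> ck_edges (2*(k+1))" unfolding ck_edges_def by fastforce
  moreover have "?f \<in> ck_edges (2*(k+1))" unfolding ck_edges_def by auto
  moreover have "disjoint_edges ?f g \<and> disjoint_edges g ?f" if "g \<in> M" for g
    using low[OF that] disjoint_edges_separated[of _ _ "2*k" "2*k+1"] by fastforce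
  ultimately show ?thesis
    using assms M_low f_notin finite_M unfolding is_SPM_def by (auto simp: card_insert_if)
qed

text \<open>A blocking set of CK(2k+2) avoiding {2k, 2k+1} meets every parallel class of CK(2k),
  so it contains at least k edges whose endpoints all lie below 2k.\<close>
lemma blocking_set_many_low_edges:
  assumes blocking: "is_blocking_set (k + 1) B"
    and f_notin: "{2*k, 2*k+1} \<notin> B"
  shows "k \<le> card {g \<in> B. \<forall>x\<in>g. x < 2*k}"
proof -
  let ?L = "{g \<in> B. \<forall>x\<in>g. x < 2*k}"
  have meets: "\<exists>h. h \<in> B \<inter> parallel_class k i" if "i < k" for i
  proof -
    have "is_SPM (k + 1) (insert {2*k, 2*k+1} (parallel_class k i))"
      using SPM_extend_boundary_edge[OF parallel_class_SPM[OF that]] .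
    then have "B \<inter> insert {2*k, 2*k+1} (parallel_class k i) \<noteq> {}"
      using blocking unfolding is_blocking_set_def by blast
    with f_notin show ?thesis by blast
  qed
  define h where "h i = (SOME h. h \<in> B \<inter> parallel_class k i)" for i
  have h: "h i \<in> B \<inter> parallel_class k i" if "i < k" for i
    unfolding h_def using someI_ex[OF meets[OF that]] .
  have "inj_on h {..<k}"
  proof (rule inj_onI, rule ccontr)
    fix i j assume ij: "i \<in> {..<k}" "j \<in> {..<k}" "h i = h j" "i \<noteq> j"
    then have "h i \<in> parallel_class k i \<inter> parallel_class k j"
      using h by (metis IntD2 IntI lessThan_iff)
    with ij show False
      using parallel_classes_disjoint[of i k j] by simp
  qed
  then have card_image_h: "card (h ` {..<k}) = k"
    by (simp add: card_image)
  have image_low: "h ` {..<k} \<subseteq> ?L"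
  proof
    fix g assume "g \<in> h ` {..<k}"
    then obtain i where "i < k" "g = h i" by auto
    with h[OF \<open>i < k\<close>] show "g \<in> ?L"
      using parallel_class_vertex_bound[OF \<open>i < k\<close>] by auto
  qed
  have finite_L: "finite ?L"
  proof (rule finite_subset[OF _ finite_ck_edges])
    show "?L \<subseteq> ck_edges (2*(k+1))"
      using blocking unfolding is_blocking_set_def by auto
  qed
  show ?thesis
    using card_mono[OF finite_L image_low] card_image_h by simp
qed

theorem corollary3p5:
  fixes m :: nat and B :: "nat set set"
  assumes "m \<ge> 2"
    and "is_blocker m B"
    and "{2*m-3, 2*m-2} \<in> B"
    and "{2*m-2, 2*m-1} \<notin> B"
  shows "\<forall>g\<in>B. (2*m-2 \<in> g \<or> 2*m-1 \<in> g) \<longrightarrow> g = {2*m-3, 2*m-2}"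
proof (intro ballI impI, rule ccontr)
  fix g assume g: "g \<in> B" "2*m-2 \<in> g \<or> 2*m-1 \<in> g" "g \<noteq> {2*m-3, 2*m-2}"
  define k where "k = m - 1"
  have m: "m = k + 1" "2*m-2 = 2*k" "2*m-1 = 2*k+1" using assms(1) by (auto simp: k_def)
  let ?e = "{2*m-3, 2*m-2}" and ?L = "{g \<in> B. \<forall>x\<in>g. x < 2*k}"
  have blocking: "is_blocking_set (k + 1) B" and card_B: "card B = k + 1"
    using assms(2) m(1) unfolding is_blocker_def by auto
  have "k \<le> card ?L"
    using blocking_set_many_low_edges[OF blocking] assms(4) m by simp
  have g_high: "2*k \<in> g \<or> 2*k+1 \<in> g"
    using g(2) unfolding m(2,3) .
  have e_high: "2*k \<in> ?e"
    unfolding m(2) by simp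
  have sub: "insert ?e (insert g ?L) \<subseteq> B"
    using assms(3) g(1) by auto
  have g_not_low: "g \<notin> ?L"
    using g_high less_irrefl not_less_eq by blast
  have e_not_low: "?e \<notin> ?L"
    using e_high by blast
  have "finite B"
    using card_B card.infinite by (metis Suc_eq_plus1 nat.distinct(1))
  then have finite_L: "finite ?L" by simp
  have "k + 2 \<le> card ?L + 2"
    using \<open>k \<le> card ?L\<close> by simp
  also have "\<dots> = card (insert ?e (insert g ?L))"
    using finite_L g(3) g_not_low e_not_low by simp
  also have "\<dots> \<le> card B"
    using card_mono[OF \<open>finite B\<close> sub] .
  finally have "k + 2 \<le> card B" .
  with card_B show False by simp
qed

end
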